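(* Let $\Gamma$ be a splice diagram satisfying the edge determinant and semigroup conditions and let $(F_{v,i})$ be a splice type system for $\Gamma$. For each pair of nodes $u,v$ of $\Gamma$ and each $i\in\{1,\dots,\delta_v-2\}$: if $u=v$ then $\mathrm{in}_{w_u}(F_{v,i})=f_{v,i}$; otherwise $\mathrm{in}_{w_u}(F_{v,i})=f_{v,i}-c_{v,e,i}\,z^{m_{v,e}}$, where $e$ is the unique edge adjacent to $v$ with $e\subseteq[v,u]$.
   Context: A splice diagram is a finite tree $\Gamma$ with at least one vertex of valency $\geq3$ and no vertex of valency $2$; vertices of valency $1$ are leaves, others nodes; $\delta_v$ is the valency of $v$. For each node $v$ and edge $e$ at $v$ a positive integer weight $d_{v,e}$ is given; $d_v=\prod_{e\ni v}d_{v,e}$. For distinct vertices $u,v$, $\ell_{u,v}$ is the product of all $d_{w,e}$ with $w$ a node on the geodesic $[u,v]$ and $e$ an edge at $w$ not in $[u,v]$; $\ell_{v,v}:=d_v$. Edge determinant condition: $d_{u,v}d_{v,u}>\ell_{u,v}$ for each edge $[u,v]$ between two nodes (where $d_{u,v}$ is the weight at $u$ of the edge toward $v$). Semigroup condition: for each node $v$ and edge $e$ at $v$, $d_v\in\sum_{\lambda\in L(v,e)}\mathbb{N}\ell_{v,\lambda}$ with $L(v,e)$ the leaves $\lambda$ with $e\subseteq[v,\lambda]$. With variables $z_\lambda$ and basis vectors $w_\lambda$ of $\mathbb{R}^n$ indexed by the $n$ leaves, $w_u=\sum_\lambda\ell_{u,\lambda}w_\lambda$ for nodes $u$. Fix $\alpha_{v,e,\lambda}\in\mathbb{N}$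 with $d_v=\sum_{\lambda\in L(v,e)}\alpha_{v,e,\lambda}\ell_{v,\lambda}$, $m_{v,e}=\sum\alpha_{v,e,\lambda}w_\lambda$, $z^{m_{v,e}}=\prod z_\lambda^{\alpha_{v,e,\lambda}}$. A splice type system consists of $F_{v,i}=f_{v,i}+g_{v,i}$ ($v$ node, $1\le i\le\delta_v-2$) with $f_{v,i}=\sum_{e\ni v}c_{v,e,i}z^{m_{v,e}}$, all maximal minors of $(c_{v,e,i})_{e,i}$ nonzero, and $g_{v,i}\in\mathbb{C}\{z_\lambda\}$ whose exponents $m$ all satisfy $w_v\cdot m>d_v$ and $w_u\cdot m>\ell_{u,v}$ for nodes $u\neq v$. For $w\in\mathbb{R}_{\ge0}^n$, $\mathrm{in}_w(F)$ is the sum of the terms of $F$ of minimal $w$-weight. *)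

theory Defs
  imports "HOL-Analysis.Analysis" "HOL-Combinatorics.Permutations"
begin

(* Trees: vertex set V, symmetric irreflexive adjacency relation adj.
   An edge at a vertex w is identified with its other endpoint x (a neighbour). *)

definition nbrs :: "('v \<Rightarrow> 'v \<Rightarrow> bool) \<Rightarrow> 'v \<Rightarrow> 'v set" where
  "nbrs adj v = {x. adj v x}"

definition valency :: "('v \<Rightarrow> 'v \<Rightarrow> bool) \<Rightarrow> 'v \<Rightarrow> nat" where
  "valency adj v = card (nbrs adj v)"

definition is_path :: "'v set \<Rightarrow> ('v \<Rightarrow> 'v \<Rightarrow> bool) \<Rightarrow> 'v list \<Rightarrow> bool" where
  "is_path V adj xs \<longleftrightarrow> xs \<noteq> [] \<and> set xs \<subseteq> V \<and> distinct xs \<and>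
     (\<forall>k. Suc k < length xs \<longrightarrow> adj (xs ! k) (xs ! Suc k))"

definition is_tree :: "'v set \<Rightarrow> ('v \<Rightarrow> 'v \<Rightarrow> bool) \<Rightarrow> bool" where
  "is_tree V adj \<longleftrightarrow> finite V \<and>
     (\<forall>x y. adj x y \<longrightarrow> x \<in> V \<and> y \<in> V \<and> adj y x \<and> x \<noteq> y) \<and>
     (\<forall>u\<in>V. \<forall>v\<in>V. \<exists>!xs. is_path V adj xs \<and> hd xs = u \<and> last xs = v)"

definition geod :: "'v set \<Rightarrow> ('v \<Rightarrow> 'v \<Rightarrow> bool) \<Rightarrow> 'v \<Rightarrow> 'v \<Rightarrow> 'v set" where
  "geod V adj u v = set (THE xs. is_path V adj xs \<and> hd xs = u \<and> last xs = v)"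

definition leaves :: "'v set \<Rightarrow> ('v \<Rightarrow> 'v \<Rightarrow> bool) \<Rightarrow> 'v set" where
  "leaves V adj = {v \<in> V. valency adj v = 1}"

definition nodes :: "'v set \<Rightarrow> ('v \<Rightarrow> 'v \<Rightarrow> bool) \<Rightarrow> 'v set" where
  "nodes V adj = {v \<in> V. valency adj v \<noteq> 1}"

definition splice_diagram :: "'v set \<Rightarrow> ('v \<Rightarrow> 'v \<Rightarrow> bool) \<Rightarrow> ('v \<Rightarrow> 'v \<Rightarrow> nat) \<Rightarrow> bool" where
  "splice_diagram V adj d \<longleftrightarrow> is_tree V adj \<and> (\<exists>v\<in>V. valency adj v \<ge> 3) \<and>
     (\<forall>v\<in>V. valency adj v \<noteq> 2) \<and>
     (\<forall>v\<in>nodes V adj. \<forall>x\<in>nbrs adj v. d v x > 0)"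

definition dv :: "('v \<Rightarrow> 'v \<Rightarrow> bool) \<Rightarrow> ('v \<Rightarrow> 'v \<Rightarrow> nat) \<Rightarrow> 'v \<Rightarrow> nat" where
  "dv adj d v = (\<Prod>x\<in>nbrs adj v. d v x)"

definition ell :: "'v set \<Rightarrow> ('v \<Rightarrow> 'v \<Rightarrow> bool) \<Rightarrow> ('v \<Rightarrow> 'v \<Rightarrow> nat) \<Rightarrow> 'v \<Rightarrow> 'v \<Rightarrow> nat" where
  "ell V adj d u v = (if u = v then dv adj d v else
     (\<Prod>w\<in>geod V adj u v \<inter> nodes V adj. \<Prod>x\<in>nbrs adj w - geod V adj u v. d w x))"

definition edge_determinant_condition :: "'v set \<Rightarrow> ('v \<Rightarrow> 'v \<Rightarrow> bool) \<Rightarrow> ('v \<Rightarrow> 'v \<Rightarrow> nat) \<Rightarrow> bool" where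
  "edge_determinant_condition V adj d \<longleftrightarrow>
     (\<forall>u\<in>nodes V adj. \<forall>v\<in>nodes V adj. adj u v \<longrightarrow> d u v * d v u > ell V adj d u v)"

definition Lset :: "'v set \<Rightarrow> ('v \<Rightarrow> 'v \<Rightarrow> bool) \<Rightarrow> 'v \<Rightarrow> 'v \<Rightarrow> 'v set" where
  "Lset V adj v x = {l \<in> leaves V adj. x \<in> geod V adj v l}"

definition semigroup_condition :: "'v set \<Rightarrow> ('v \<Rightarrow> 'v \<Rightarrow> bool) \<Rightarrow> ('v \<Rightarrow> 'v \<Rightarrow> nat) \<Rightarrow> bool" where
  "semigroup_condition V adj d \<longleftrightarrow>
     (\<forall>v\<in>nodes V adj. \<forall>x\<in>nbrs adj v. \<exists>a :: 'v \<Rightarrow> nat.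
        dv adj d v = (\<Sum>l\<in>Lset V adj v x. a l * ell V adj d v l))"

text \<open>Exponent vectors are functions 'v => nat (only leaf coordinates are used);
  w_u . m for a node u.\<close>
definition wdot :: "'v set \<Rightarrow> ('v \<Rightarrow> 'v \<Rightarrow> bool) \<Rightarrow> ('v \<Rightarrow> 'v \<Rightarrow> nat) \<Rightarrow> 'v \<Rightarrow> ('v \<Rightarrow> nat) \<Rightarrow> nat" where
  "wdot V adj d u m = (\<Sum>l\<in>leaves V adj. ell V adj d u l * m l)"

definition mexp :: "'v set \<Rightarrow> ('v \<Rightarrow> 'v \<Rightarrow> bool) \<Rightarrow> ('v \<Rightarrow> 'v \<Rightarrow> 'v \<Rightarrow> nat) \<Rightarrow> 'v \<Rightarrow> 'v \<Rightarrow> ('v \<Rightarrow> nat)" where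
  "mexp V adj \<alpha> v x = (\<lambda>l. if l \<in> Lset V adj v x then \<alpha> v x l else 0)"

text \<open>Power series in the variables z_l are represented by their coefficient functions
  (exponent vector => coefficient).\<close>
type_synonym 'v series = "('v \<Rightarrow> nat) \<Rightarrow> complex"

definition mono_series :: "('v \<Rightarrow> nat) \<Rightarrow> complex \<Rightarrow> 'v series" where
  "mono_series m a = (\<lambda>m'. if m' = m then a else 0)"

definition fpart :: "'v set \<Rightarrow> ('v \<Rightarrow> 'v \<Rightarrow> bool) \<Rightarrow> ('v \<Rightarrow> 'v \<Rightarrow> 'v \<Rightarrow> nat) \<Rightarrow>
    ('v \<Rightarrow> 'v \<Rightarrow> nat \<Rightarrow> complex) \<Rightarrow> 'v \<Rightarrow> nat \<Rightarrow> 'v series" where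
  "fpart V adj \<alpha> c v i = (\<lambda>m. \<Sum>x\<in>nbrs adj v. mono_series (mexp V adj \<alpha> v x) (c v x i) m)"

definition in_form :: "(('v \<Rightarrow> nat) \<Rightarrow> nat) \<Rightarrow> 'v series \<Rightarrow> 'v series" where
  "in_form wt F = (\<lambda>m. if F m \<noteq> 0 \<and> wt m = (LEAST k. \<exists>m'. F m' \<noteq> 0 \<and> wt m' = k) then F m else 0)"

definition det_on :: "nat \<Rightarrow> (nat \<Rightarrow> nat \<Rightarrow> complex) \<Rightarrow> complex" where
  "det_on k M = (\<Sum>p | p permutes {1..k}. of_int (sign p) * (\<Prod>a\<in>{1..k}. M a (p a)))"

definition max_minors_nonzero :: "('v \<Rightarrow> 'v \<Rightarrow> bool) \<Rightarrow> ('v \<Rightarrow> 'v \<Rightarrow> nat \<Rightarrow> complex) \<Rightarrow> 'v \<Rightarrow> bool" where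
  "max_minors_nonzero adj c v \<longleftrightarrow>
     (\<forall>\<sigma>. inj_on \<sigma> {1..valency adj v - 2} \<and> \<sigma> ` {1..valency adj v - 2} \<subseteq> nbrs adj v \<longrightarrow>
        det_on (valency adj v - 2) (\<lambda>a b. c v (\<sigma> a) b) \<noteq> 0)"

definition leaf_exps :: "'v set \<Rightarrow> ('v \<Rightarrow> 'v \<Rightarrow> bool) \<Rightarrow> ('v \<Rightarrow> nat) set" where
  "leaf_exps V adj = {m. \<forall>y. m y \<noteq> 0 \<longrightarrow> y \<in> leaves V adj}"

definition convergent_series :: "'v set \<Rightarrow> ('v \<Rightarrow> 'v \<Rightarrow> bool) \<Rightarrow> 'v series \<Rightarrow> bool" where
  "convergent_series V adj g \<longleftrightarrow> (\<forall>m. g m \<noteq> 0 \<longrightarrow> m \<in> leaf_exps V adj) \<and>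
     (\<exists>r::real. r > 0 \<and>
        (\<lambda>m. norm (g m) * r ^ (\<Sum>l\<in>leaves V adj. m l)) summable_on leaf_exps V adj)"

definition g_admissible :: "'v set \<Rightarrow> ('v \<Rightarrow> 'v \<Rightarrow> bool) \<Rightarrow> ('v \<Rightarrow> 'v \<Rightarrow> nat) \<Rightarrow> 'v \<Rightarrow> 'v series \<Rightarrow> bool" where
  "g_admissible V adj d v g \<longleftrightarrow> convergent_series V adj g \<and>
     (\<forall>m. g m \<noteq> 0 \<longrightarrow> wdot V adj d v m > dv adj d v \<and>
        (\<forall>u\<in>nodes V adj. u \<noteq> v \<longrightarrow> wdot V adj d u m > ell V adj d u v))"

definition F_series :: "'v set \<Rightarrow> ('v \<Rightarrow> 'v \<Rightarrow> bool) \<Rightarrow> ('v \<Rightarrow> 'v \<Rightarrow> 'v \<Rightarrow> nat) \<Rightarrow>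
    ('v \<Rightarrow> 'v \<Rightarrow> nat \<Rightarrow> complex) \<Rightarrow> ('v \<Rightarrow> nat \<Rightarrow> 'v series) \<Rightarrow> 'v \<Rightarrow> nat \<Rightarrow> 'v series" where
  "F_series V adj \<alpha> c g v i = (\<lambda>m. fpart V adj \<alpha> c v i m + g v i m)"

definition splice_type_system :: "'v set \<Rightarrow> ('v \<Rightarrow> 'v \<Rightarrow> bool) \<Rightarrow> ('v \<Rightarrow> 'v \<Rightarrow> nat) \<Rightarrow>
    ('v \<Rightarrow> 'v \<Rightarrow> 'v \<Rightarrow> nat) \<Rightarrow> ('v \<Rightarrow> 'v \<Rightarrow> nat \<Rightarrow> complex) \<Rightarrow> ('v \<Rightarrow> nat \<Rightarrow> 'v series) \<Rightarrow> bool" where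
  "splice_type_system V adj d \<alpha> c g \<longleftrightarrow>
     (\<forall>v\<in>nodes V adj. \<forall>x\<in>nbrs adj v.
        dv adj d v = (\<Sum>l\<in>Lset V adj v x. \<alpha> v x l * ell V adj d v l)) \<and>
     (\<forall>v\<in>nodes V adj. max_minors_nonzero adj c v) \<and>
     (\<forall>v\<in>nodes V adj. \<forall>i\<in>{1..valency adj v - 2}. g_admissible V adj d v (g v i))"

end

theory Submission
  imports Defs
begin

(*
  Let u, v be nodes and \<lambda> a leaf beyond the edge e at v.  Moving the start of a geodesic one
  edge along it multiplies ell by a factor that depends only on that edge, so
  d_v ell(u,\<lambda>) = ell(u,v) ell(v,\<lambda>) whenever v lies on [u,\<lambda>], i.e. unless e points towards u.
  If it does, induction along [v,\<lambda>], using the edge determinant condition at every step, gives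
  ell(u,v) ell(v,\<lambda>) < d_v ell(u,\<lambda>).  Summing against the \<alpha>_{v,e,\<lambda>}, every monomial
  z^{m_{v,e}} has w_u-weight ell(u,v) (resp. d_v if u = v), except the one on the edge towards u,
  which is heavier; g_{v,i} is heavier by assumption.  As all maximal minors of (c_{v,e,i}) are
  nonzero, among any \<delta>_v - 2 edges some c_{v,e,i} is nonzero, so this minimal weight is attained.
*)

lemma is_path_iff_successively:
  "is_path V adj xs \<longleftrightarrow> xs \<noteq> [] \<and> set xs \<subseteq> V \<and> distinct xs \<and> successively adj xs"
  unfolding is_path_def successively_conv_nth ..

locale tree =
  fixes V :: "'v set" and adj :: "'v \<Rightarrow> 'v \<Rightarrow> bool"
  assumes is_tree: "is_tree V adj"
begin

definition geodesic :: "'v \<Rightarrow> 'v \<Rightarrow> 'v list" where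
  "geodesic a b = (THE xs. is_path V adj xs \<and> hd xs = a \<and> last xs = b)"

text \<open>Since \<open>geodesic a a = [a]\<close>, the value \<open>towards a a\<close> is unspecified.\<close>
definition towards :: "'v \<Rightarrow> 'v \<Rightarrow> 'v" where
  "towards a b = geodesic a b ! 1"

lemma geod_eq_set_geodesic: "geod V adj a b = set (geodesic a b)"
  unfolding geod_def geodesic_def ..

lemma finite_V: "finite V"
  using is_tree unfolding is_tree_def by blast

lemma adj_in_V: "adj x y \<Longrightarrow> x \<in> V \<and> y \<in> V"
  using is_tree unfolding is_tree_def by blast

lemma adj_sym: "adj x y \<Longrightarrow> adj y x"
  using is_tree unfolding is_tree_def by blast

lemma adj_irrefl: "\<not> adj x x"
  using is_tree unfolding is_tree_def by blast

lemma nbrs_subset_V: "nbrs adj w \<subseteq> V"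
  unfolding nbrs_def using adj_in_V by blast

lemma finite_nbrs: "finite (nbrs adj w)"
  using finite_subset[OF nbrs_subset_V finite_V] .

lemma nodes_subset_V: "nodes V adj \<subseteq> V"
  unfolding nodes_def by blast

lemma geodesic_spec:
  assumes "a \<in> V" "b \<in> V"
  shows "is_path V adj (geodesic a b) \<and> hd (geodesic a b) = a \<and> last (geodesic a b) = b"
proof -
  have "\<exists>!xs. is_path V adj xs \<and> hd xs = a \<and> last xs = b"
    using is_tree assms unfolding is_tree_def by blast
  then show ?thesis
    unfolding geodesic_def by (rule theI')
qed

lemma geodesic_eqI:
  assumes "is_path V adj xs" "hd xs = a" "last xs = b"
  shows "geodesic a b = xs"
proof -
  have "a \<in> V" "b \<in> V"
    using assms by (auto simp: is_path_def)
  then have "\<exists>!xs. is_path V adj xs \<and> hd xs = a \<and> last xs = b"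
    using is_tree unfolding is_tree_def by blast
  then show ?thesis
    using geodesic_spec[OF \<open>a \<in> V\<close> \<open>b \<in> V\<close>] assms by blast
qed

context
  fixes a b
  assumes a: "a \<in> V" and b: "b \<in> V"
begin

lemma geodesic_not_Nil: "geodesic a b \<noteq> []"
  and set_geodesic_subset: "set (geodesic a b) \<subseteq> V"
  and distinct_geodesic: "distinct (geodesic a b)"
  and successively_geodesic: "successively adj (geodesic a b)"
  and hd_geodesic: "hd (geodesic a b) = a"
  and last_geodesic: "last (geodesic a b) = b"
  using geodesic_spec[OF a b] by (simp_all add: is_path_iff_successively)

lemma start_in_geodesic: "a \<in> set (geodesic a b)"
  using geodesic_not_Nil hd_geodesic hd_in_set by force

lemma end_in_geodesic: "b \<in> set (geodesic a b)"
  using geodesic_not_Nil last_geodesic last_in_set by force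

lemma geodesic_rev: "geodesic b a = rev (geodesic a b)"
proof (rule geodesic_eqI)
  have "successively (\<lambda>x y. adj y x) (geodesic a b)"
    using successively_geodesic by (rule successively_mono) (rule adj_sym)
  then show "is_path V adj (rev (geodesic a b))"
    using geodesic_not_Nil set_geodesic_subset distinct_geodesic
    by (simp add: is_path_iff_successively)
  show "hd (rev (geodesic a b)) = b"
    using geodesic_not_Nil last_geodesic by (simp add: hd_rev)
  show "last (rev (geodesic a b)) = a"
    using geodesic_not_Nil hd_geodesic by (simp add: last_rev)
qed

lemma geodesic_prefix:
  assumes "geodesic a b = xs @ ys" "xs \<noteq> []"
  shows "geodesic a (last xs) = xs"
proof (rule geodesic_eqI)
  show "is_path V adj xs"
    using assms geodesic_not_Nil set_geodesic_subset distinct_geodesic successively_geodesic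
    by (auto simp: is_path_iff_successively successively_append_iff)
  show "hd xs = a"
    using assms hd_geodesic by simp
qed simp

lemma geodesic_Cons:
  assumes "a \<noteq> b"
  shows "geodesic a b = a # geodesic (towards a b) b" and "adj a (towards a b)"
proof -
  obtain r where r: "geodesic a b = a # r"
    using geodesic_not_Nil hd_geodesic by (metis list.collapse)
  have "r \<noteq> []"
    using r last_geodesic assms by auto
  then have towards: "towards a b = hd r"
    unfolding towards_def r by (simp add: hd_conv_nth)
  have "is_path V adj r"
    using r \<open>r \<noteq> []\<close> set_geodesic_subset distinct_geodesic successively_geodesic
    by (auto simp: is_path_iff_successively successively_Cons)
  then have "geodesic (towards a b) b = r"
    using towards last_geodesic r \<open>r \<noteq> []\<close> by (auto intro: geodesic_eqI)
  then show "geodesic a b = a # geodesic (towards a b) b"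
    using r by simp
  show "adj a (towards a b)"
    using successively_geodesic r \<open>r \<noteq> []\<close> towards by (simp add: successively_Cons)
qed

lemma towards_eq_if_in_geodesic:
  assumes "y \<in> set (geodesic a b)" "y \<noteq> a"
  shows "towards a y = towards a b"
proof -
  obtain xs zs where split: "geodesic a b = xs @ y # zs"
    using assms(1) split_list by metis
  have "xs \<noteq> []"
    using split hd_geodesic assms(2) by auto
  then have "geodesic a y = xs @ [y]"
    using geodesic_prefix[of "xs @ [y]" zs] split by simp
  then show ?thesis
    unfolding towards_def split using \<open>xs \<noteq> []\<close>
    by (cases xs) (auto simp: nth_append)
qed

lemma interior_of_geodesic_in_nodes:
  assumes "y \<in> set (geodesic a b)" "y \<noteq> a" "y \<noteq> b"
  shows "y \<in> nodes V adj"
proof -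
  obtain xs zs where split: "geodesic a b = xs @ y # zs"
    using assms(1) split_list by metis
  have "xs \<noteq> []" "zs \<noteq> []"
    using split hd_geodesic last_geodesic assms(2,3) by auto
  then have "adj y (last xs)" "adj y (hd zs)"
    using successively_geodesic split
    by (auto simp: successively_append_iff successively_Cons adj_sym)
  moreover have "last xs \<noteq> hd zs"
    using distinct_geodesic split last_in_set[OF \<open>xs \<noteq> []\<close>] hd_in_set[OF \<open>zs \<noteq> []\<close>] by auto
  ultimately have "card {last xs, hd zs} \<le> card (nbrs adj y)"
    by (intro card_mono finite_nbrs) (auto simp: nbrs_def)
  then show ?thesis
    using \<open>last xs \<noteq> hd zs\<close> \<open>adj y (last xs)\<close> adj_in_V unfolding nodes_def valency_def by auto
qed

end

lemma towards_in_geodesic: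
  assumes "a \<in> V" "b \<in> V" "a \<noteq> b"
  shows "towards a b \<in> set (geodesic a b)"
proof -
  have "towards a b \<in> V"
    using geodesic_Cons(2)[OF assms] adj_in_V by blast
  then show ?thesis
    using geodesic_Cons(1)[OF assms] start_in_geodesic[OF _ assms(2)] by (metis list.set_intros(2))
qed

lemma geodesic_refl: "a \<in> V \<Longrightarrow> geodesic a a = [a]"
  by (rule geodesic_eqI) (auto simp: is_path_iff_successively)

lemma geodesic_adj: "adj a b \<Longrightarrow> geodesic a b = [a, b]"
  by (rule geodesic_eqI) (auto simp: is_path_iff_successively adj_in_V adj_irrefl)

lemma towards_adj: "adj a b \<Longrightarrow> towards a b = b"
  unfolding towards_def using geodesic_adj by simp

lemma towards_unique:
  assumes "a \<in> V" "b \<in> V" "adj a y" "y \<in> set (geodesic a b)"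
  shows "y = towards a b"
proof -
  have "y \<noteq> a"
    using assms(3) adj_irrefl by blast
  then show ?thesis
    using towards_eq_if_in_geodesic[OF assms(1,2,4)] towards_adj[OF assms(3)] by simp
qed

lemma geodesic_step:
  assumes "adj a a'" "z \<in> V" "a' \<in> set (geodesic a z)"
  shows "geodesic a z = a # geodesic a' z"
    and "w \<in> set (geodesic a' z) \<Longrightarrow> adj w a \<longleftrightarrow> w = a'"
proof -
  have "a \<in> V"
    using assms(1) adj_in_V by blast
  have "a \<noteq> z"
    using assms(1,3) geodesic_refl[OF \<open>a \<in> V\<close>] adj_irrefl by auto
  have "a' = towards a z"
    using towards_unique[OF \<open>a \<in> V\<close> assms(2,1,3)] .
  then show Cons: "geodesic a z = a # geodesic a' z"
    using geodesic_Cons(1)[OF \<open>a \<in> V\<close> assms(2) \<open>a \<noteq> z\<close>] by simp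
  show "adj w a \<longleftrightarrow> w = a'" if "w \<in> set (geodesic a' z)"
  proof
    assume "adj w a"
    then show "w = a'"
      using towards_unique[OF \<open>a \<in> V\<close> assms(2) adj_sym] Cons that \<open>a' = towards a z\<close> by simp
  qed (use assms(1) adj_sym in simp)
qed

lemma nbrs_geod_iff_towards:
  assumes "a \<in> V" "b \<in> V" "a \<noteq> b"
  shows "x \<in> nbrs adj a \<and> x \<in> geod V adj a b \<longleftrightarrow> x = towards a b"
  using towards_unique[OF assms(1,2)] geodesic_Cons(2)[OF assms] towards_in_geodesic[OF assms]
  unfolding nbrs_def geod_eq_set_geodesic by blast

lemma towards_in_nodes:
  assumes "a \<in> V" "b \<in> nodes V adj" "a \<noteq> b"
  shows "towards a b \<in> nodes V adj"
proof -
  have "b \<in> V"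
    using assms(2) nodes_subset_V by blast
  have "towards a b \<noteq> a"
    using geodesic_Cons(2)[OF assms(1) \<open>b \<in> V\<close> assms(3)] adj_irrefl by force
  then show ?thesis
    using interior_of_geodesic_in_nodes[OF assms(1) \<open>b \<in> V\<close> towards_in_geodesic] \<open>b \<in> V\<close> assms
    by (cases "towards a b = b") auto
qed

lemma geodesics_meet_only_at_start:
  assumes "v \<in> V" "a \<in> V" "b \<in> V" "a \<noteq> v" "b \<noteq> v" "towards v a \<noteq> towards v b"
  shows "set (geodesic v a) \<inter> set (geodesic v b) = {v}"
proof
  show "set (geodesic v a) \<inter> set (geodesic v b) \<subseteq> {v}"
  proof
    fix y
    assume y: "y \<in> set (geodesic v a) \<inter> set (geodesic v b)"
    show "y \<in> {v}"
    proof (rule ccontr)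
      assume "y \<notin> {v}"
      then have "towards v a = towards v b"
        using towards_eq_if_in_geodesic[OF assms(1,2), of y]
          towards_eq_if_in_geodesic[OF assms(1,3), of y] y
        by auto
      with assms(6) show False ..
    qed
  qed
  show "{v} \<subseteq> set (geodesic v a) \<inter> set (geodesic v b)"
    using start_in_geodesic[OF assms(1,2)] start_in_geodesic[OF assms(1,3)] by simp
qed

lemma geodesic_append:
  assumes "u \<in> V" "v \<in> V" "l \<in> V" "set (geodesic u v) \<inter> set (geodesic v l) = {v}"
  shows "geodesic u l = geodesic u v @ tl (geodesic v l)"
proof (rule geodesic_eqI)
  obtain r where r: "geodesic v l = v # r"
    using geodesic_not_Nil[OF assms(2,3)] hd_geodesic[OF assms(2,3)] by (metis list.collapse)
  have "set (geodesic u v) \<inter> set r = {}"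
    using assms(4) distinct_geodesic[OF assms(2,3)] r by auto
  then show "is_path V adj (geodesic u v @ tl (geodesic v l))"
    using r geodesic_spec[OF assms(1,2)] geodesic_spec[OF assms(2,3)]
    by (auto simp: is_path_iff_successively successively_append_iff successively_Cons)
  show "hd (geodesic u v @ tl (geodesic v l)) = u"
    using geodesic_not_Nil[OF assms(1,2)] hd_geodesic[OF assms(1,2)] by simp
  show "last (geodesic u v @ tl (geodesic v l)) = l"
    using r last_geodesic[OF assms(1,2)] last_geodesic[OF assms(2,3)] geodesic_not_Nil[OF assms(1,2)]
    by auto
qed

end

locale weighted_tree = tree V adj for V :: "'v set" and adj +
  fixes d :: "'v \<Rightarrow> 'v \<Rightarrow> nat"
  assumes weight_pos: "w \<in> nodes V adj \<Longrightarrow> adj w y \<Longrightarrow> 0 < d w y"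
begin

definition d_off :: "'v \<Rightarrow> 'v set \<Rightarrow> nat" where
  "d_off w S = (\<Prod>y\<in>nbrs adj w - S. d w y)"

lemma d_off_pos: "w \<in> nodes V adj \<Longrightarrow> 0 < d_off w S"
  unfolding d_off_def by (rule prod_pos) (auto simp: nbrs_def weight_pos)

lemma dv_pos: "w \<in> nodes V adj \<Longrightarrow> 0 < dv adj d w"
  unfolding dv_def by (rule prod_pos) (auto simp: nbrs_def weight_pos)

lemma ell_pos: "u \<noteq> v \<or> u \<in> nodes V adj \<Longrightarrow> 0 < ell V adj d u v"
  unfolding ell_def using dv_pos by (auto intro!: prod_pos simp: nbrs_def weight_pos)

lemma dv_eq_d_off_mult:
  assumes "adj w y"
  shows "dv adj d w = d_off w {y} * d w y"
proof -
  have "y \<in> nbrs adj w"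
    using assms by (simp add: nbrs_def)
  then show ?thesis
    unfolding dv_def d_off_def using prod.remove[OF finite_nbrs] by (simp add: mult.commute)
qed

lemma d_off_insert:
  assumes "a \<notin> S"
  shows "d_off w S = (if adj w a then d w a else 1) * d_off w (insert a S)"
proof (cases "adj w a")
  case True
  then have "a \<in> nbrs adj w - S"
    using assms by (simp add: nbrs_def)
  moreover have "nbrs adj w - insert a S = nbrs adj w - S - {a}"
    by blast
  ultimately show ?thesis
    unfolding d_off_def using prod.remove[of "nbrs adj w - S"] finite_nbrs True by simp
next
  case False
  then have "nbrs adj w - insert a S = nbrs adj w - S"
    by (auto simp: nbrs_def)
  then show ?thesis
    unfolding d_off_def using False by simp
qed

lemma ell_eq_prod_geodesic:
  assumes "u \<in> V" "v \<in> V" "u \<noteq> v \<or> u \<in> nodes V adj"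
  shows "ell V adj d u v = (\<Prod>w\<in>set (geodesic u v) \<inter> nodes V adj. d_off w (set (geodesic u v)))"
proof (cases "u = v")
  case True
  then have "set (geodesic u v) \<inter> nodes V adj = {u}"
    using assms geodesic_refl[OF assms(1)] by auto
  moreover have "nbrs adj u - {u} = nbrs adj u"
    using adj_irrefl by (auto simp: nbrs_def)
  ultimately show ?thesis
    using True geodesic_refl[OF assms(1)] by (simp add: ell_def d_off_def dv_def)
next
  case False
  then show ?thesis
    unfolding ell_def d_off_def geod_eq_set_geodesic by simp
qed

lemma ell_refl [simp]: "ell V adj d v v = dv adj d v"
  by (simp add: ell_def)

lemma ell_sym: "u \<in> V \<Longrightarrow> v \<in> V \<Longrightarrow> ell V adj d u v = ell V adj d v u"
  unfolding ell_def geod_eq_set_geodesic using geodesic_rev[of u v] by simp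

lemma ell_step:
  assumes a: "a \<in> nodes V adj" and a': "a' \<in> nodes V adj" and "adj a a'"
    and "z \<in> V" and "a' \<in> set (geodesic a z)"
  shows "ell V adj d a z * d a' a = ell V adj d a' z * d_off a {a'}"
proof -
  have "a \<in> V" "a' \<in> V"
    using \<open>adj a a'\<close> adj_in_V by auto
  define G where "G = set (geodesic a' z)"
  have geodesic_a: "geodesic a z = a # geodesic a' z"
    and adj_a_iff: "\<And>w. w \<in> G \<Longrightarrow> adj w a \<longleftrightarrow> w = a'"
    using geodesic_step[OF \<open>adj a a'\<close> \<open>z \<in> V\<close> assms(5)] unfolding G_def by auto
  then have set_geodesic_a: "set (geodesic a z) = insert a G"
    unfolding G_def by simp
  have "a \<notin> G"
    using distinct_geodesic[OF \<open>a \<in> V\<close> \<open>z \<in> V\<close>] geodesic_a unfolding G_def by simp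
  have "a' \<in> G" "finite G"
    unfolding G_def using start_in_geodesic[OF \<open>a' \<in> V\<close> \<open>z \<in> V\<close>] by simp_all
  have "nbrs adj a - insert a G = nbrs adj a - {a'}"
    using adj_a_iff adj_sym adj_irrefl \<open>a' \<in> G\<close> by (auto simp: nbrs_def)
  have "ell V adj d a z = (\<Prod>w\<in>insert a (G \<inter> nodes V adj). d_off w (insert a G))"
    using ell_eq_prod_geodesic[OF \<open>a \<in> V\<close> \<open>z \<in> V\<close>] set_geodesic_a a by simp
  also have "\<dots> = d_off a (insert a G) * (\<Prod>w\<in>G \<inter> nodes V adj. d_off w (insert a G))"
    using \<open>a \<notin> G\<close> \<open>finite G\<close> by simp
  also have "d_off a (insert a G) = d_off a {a'}"
    unfolding d_off_def using \<open>nbrs adj a - insert a G = nbrs adj a - {a'}\<close> by simp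
  finally have "ell V adj d a z = d_off a {a'} * (\<Prod>w\<in>G \<inter> nodes V adj. d_off w (insert a G))" .
  moreover have "ell V adj d a' z = d a' a * (\<Prod>w\<in>G \<inter> nodes V adj. d_off w (insert a G))"
  proof -
    have "ell V adj d a' z = (\<Prod>w\<in>G \<inter> nodes V adj. d_off w G)"
      using ell_eq_prod_geodesic[OF \<open>a' \<in> V\<close> \<open>z \<in> V\<close>] a' unfolding G_def by simp
    also have "\<dots> = (\<Prod>w\<in>G \<inter> nodes V adj. (if w = a' then d a' a else 1) * d_off w (insert a G))"
      using d_off_insert[OF \<open>a \<notin> G\<close>] adj_a_iff by (intro prod.cong) auto
    also have "\<dots> = d a' a * (\<Prod>w\<in>G \<inter> nodes V adj. d_off w (insert a G))"
      using \<open>a' \<in> G\<close> a' \<open>finite G\<close> by (simp add: prod.distrib prod.delta)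
    finally show ?thesis .
  qed
  ultimately show ?thesis
    by simp
qed

lemma ell_adj:
  assumes "adj a b" "a \<in> nodes V adj" "b \<in> nodes V adj"
  shows "ell V adj d a b = d_off a {b} * d_off b {a}"
proof -
  have "b \<in> V"
    using assms(1) adj_in_V by blast
  have "ell V adj d a b * d b a = ell V adj d b b * d_off a {b}"
    using ell_step[OF assms(2,3,1) \<open>b \<in> V\<close> end_in_geodesic[OF _ \<open>b \<in> V\<close>]] assms(1) adj_in_V by blast
  also have "\<dots> = d_off a {b} * d_off b {a} * d b a"
    using dv_eq_d_off_mult[OF adj_sym[OF assms(1)]] by (simp add: ell_def)
  finally show ?thesis
    using weight_pos[OF assms(3) adj_sym[OF assms(1)]] by simp
qed

lemma ell_mult_ell_eq_step:
  assumes u: "u \<in> nodes V adj" and u': "u' \<in> nodes V adj" and "adj u u'"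
    and "v \<in> V" "l \<in> V" "u' \<in> set (geodesic u v)" "u' \<in> set (geodesic u l)"
    and eq: "ell V adj d u' v * ell V adj d v l = dv adj d v * ell V adj d u' l"
  shows "ell V adj d u v * ell V adj d v l = dv adj d v * ell V adj d u l"
proof -
  have step_v: "ell V adj d u v * d u' u = ell V adj d u' v * d_off u {u'}"
    using ell_step[OF u u' \<open>adj u u'\<close> \<open>v \<in> V\<close> assms(6)] .
  have step_l: "ell V adj d u l * d u' u = ell V adj d u' l * d_off u {u'}"
    using ell_step[OF u u' \<open>adj u u'\<close> \<open>l \<in> V\<close> assms(7)] .
  have "ell V adj d u v * ell V adj d v l * d u' u = ell V adj d u v * d u' u * ell V adj d v l"
    by (simp add: ac_simps)
  also have "\<dots> = ell V adj d u' v * ell V adj d v l * d_off u {u'}"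
    using step_v by (simp add: ac_simps)
  also have "\<dots> = dv adj d v * (ell V adj d u' l * d_off u {u'})"
    using eq by simp
  also have "\<dots> = dv adj d v * ell V adj d u l * d u' u"
    using step_l by simp
  finally show ?thesis
    using weight_pos[OF u' adj_sym[OF \<open>adj u u'\<close>]] by simp
qed

lemma ell_mult_ell_eq_if_separates:
  assumes "u \<in> nodes V adj" "v \<in> nodes V adj" "l \<in> V"
    and "set (geodesic u v) \<inter> set (geodesic v l) = {v}"
  shows "ell V adj d u v * ell V adj d v l = dv adj d v * ell V adj d u l"
  using assms
proof (induction "length (geodesic u v)" arbitrary: u rule: less_induct)
  case less
  show ?case
  proof (cases "u = v")
    case True
    then show ?thesis
      by simp
  next
    case False
    have "u \<in> V" "v \<in> V"
      using less.prems nodes_subset_V by auto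
    define u' where "u' = towards u v"
    have geodesic_u: "geodesic u v = u # geodesic u' v" and "adj u u'"
      and "u' \<in> set (geodesic u v)"
      using geodesic_Cons[OF \<open>u \<in> V\<close> \<open>v \<in> V\<close> False] towards_in_geodesic[OF \<open>u \<in> V\<close> \<open>v \<in> V\<close> False]
      unfolding u'_def by auto
    have "u' \<in> nodes V adj"
      unfolding u'_def using towards_in_nodes[OF \<open>u \<in> V\<close> less.prems(2) False] .
    have "u' \<in> V"
      using \<open>adj u u'\<close> adj_in_V by blast
    have "set (geodesic u' v) \<inter> set (geodesic v l) = {v}"
      using less.prems(4) geodesic_u end_in_geodesic[OF \<open>u' \<in> V\<close> \<open>v \<in> V\<close>]
        start_in_geodesic[OF \<open>v \<in> V\<close> less.prems(3)] by auto
    then have "ell V adj d u' v * ell V adj d v l = dv adj d v * ell V adj d u' l"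
      using less.hyps[of u'] geodesic_u \<open>u' \<in> nodes V adj\<close> less.prems(2,3) by simp
    moreover have "u' \<in> set (geodesic u l)"
      using geodesic_append[OF \<open>u \<in> V\<close> \<open>v \<in> V\<close> less.prems(3,4)] \<open>u' \<in> set (geodesic u v)\<close> by simp
    ultimately show ?thesis
      using ell_mult_ell_eq_step[OF less.prems(1) \<open>u' \<in> nodes V adj\<close> \<open>adj u u'\<close> \<open>v \<in> V\<close>
          less.prems(3) \<open>u' \<in> set (geodesic u v)\<close>] by blast
  qed
qed

lemma ell_mult_ell_eq_if_different_branches:
  assumes "u \<in> nodes V adj" "v \<in> nodes V adj" "l \<in> V" "u \<noteq> v" "l \<noteq> v"
    and "towards v u \<noteq> towards v l"
  shows "ell V adj d u v * ell V adj d v l = dv adj d v * ell V adj d u l"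
proof -
  have "u \<in> V" "v \<in> V"
    using assms(1,2) nodes_subset_V by auto
  have "set (geodesic v u) \<inter> set (geodesic v l) = {v}"
    using geodesics_meet_only_at_start[OF \<open>v \<in> V\<close> \<open>u \<in> V\<close> assms(3-6)] .
  then have "set (geodesic u v) \<inter> set (geodesic v l) = {v}"
    using geodesic_rev[OF \<open>u \<in> V\<close> \<open>v \<in> V\<close>] by simp
  then show ?thesis
    by (rule ell_mult_ell_eq_if_separates[OF assms(1-3)])
qed

lemma ell_mult_ell_less_step:
  assumes "edge_determinant_condition V adj d"
    and v: "v \<in> nodes V adj" and v': "v' \<in> nodes V adj" and "adj v v'"
    and u: "u \<in> nodes V adj" and "l \<in> V"
    and "v' \<in> set (geodesic v u)" "v' \<in> set (geodesic v l)"
    and le: "ell V adj d u v' * ell V adj d v' l \<le> dv adj d v' * ell V adj d u l"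
  shows "ell V adj d u v * ell V adj d v l < dv adj d v * ell V adj d u l"
proof -
  have "u \<in> V" "v \<in> V" "v' \<in> V"
    using u v v' nodes_subset_V by auto
  define a b D E where "a = d v v'" and "b = d v' v" and "D = d_off v {v'}" and "E = d_off v' {v}"
  have step_u: "ell V adj d v u * b = ell V adj d v' u * D"
    unfolding b_def D_def using ell_step[OF v v' \<open>adj v v'\<close> \<open>u \<in> V\<close> assms(7)] .
  have step_l: "ell V adj d v l * b = ell V adj d v' l * D"
    unfolding b_def D_def using ell_step[OF v v' \<open>adj v v'\<close> \<open>l \<in> V\<close> assms(8)] .
  have "D * E < a * b"
    using assms(1) ell_adj[OF \<open>adj v v'\<close> v v'] v v' \<open>adj v v'\<close>
    unfolding a_def b_def D_def E_def edge_determinant_condition_def by force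
  have "dv adj d v = D * a" "dv adj d v' = E * b"
    unfolding a_def b_def D_def E_def
    using dv_eq_d_off_mult \<open>adj v v'\<close> adj_sym by auto
  have "0 < b" "0 < D"
    unfolding b_def D_def using weight_pos[OF v' adj_sym[OF \<open>adj v v'\<close>]] d_off_pos[OF v] by auto
  have "0 < ell V adj d u l"
    using ell_pos u by blast
  have "ell V adj d u v * ell V adj d v l * (b * b) = (ell V adj d v u * b) * (ell V adj d v l * b)"
    using ell_sym[OF \<open>u \<in> V\<close> \<open>v \<in> V\<close>] by (simp add: ac_simps)
  also have "\<dots> = ell V adj d u v' * ell V adj d v' l * (D * D)"
    using step_u step_l ell_sym[OF \<open>u \<in> V\<close> \<open>v' \<in> V\<close>] by (simp add: ac_simps)
  also have "\<dots> \<le> dv adj d v' * ell V adj d u l * (D * D)"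
    using le by (rule mult_right_mono) simp
  also have "\<dots> = (D * E) * (b * ell V adj d u l * D)"
    using \<open>dv adj d v' = E * b\<close> by (simp add: ac_simps)
  also have "\<dots> < (a * b) * (b * ell V adj d u l * D)"
    using \<open>D * E < a * b\<close> \<open>0 < b\<close> \<open>0 < D\<close> \<open>0 < ell V adj d u l\<close> by simp
  also have "\<dots> = dv adj d v * ell V adj d u l * (b * b)"
    using \<open>dv adj d v = D * a\<close> by (simp add: ac_simps)
  finally show ?thesis
    by simp
qed

lemma ell_mult_ell_less_if_same_branch:
  assumes "edge_determinant_condition V adj d"
    and "u \<in> nodes V adj" "v \<in> nodes V adj" "l \<in> V" "u \<noteq> v" "l \<noteq> v"
    and "towards v u = towards v l"
  shows "ell V adj d u v * ell V adj d v l < dv adj d v * ell V adj d u l"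
  using assms(2-)
proof (induction "length (geodesic v l)" arbitrary: v rule: less_induct)
  case less
  have "u \<in> V" "v \<in> V"
    using less.prems nodes_subset_V by auto
  define v' where "v' = towards v u"
  have "v' \<in> nodes V adj"
    unfolding v'_def using towards_in_nodes[OF \<open>v \<in> V\<close> less.prems(1)] less.prems(4) by simp
  have "adj v v'" "v' \<in> set (geodesic v u)"
    unfolding v'_def using geodesic_Cons(2) towards_in_geodesic \<open>u \<in> V\<close> \<open>v \<in> V\<close> less.prems(4)
    by auto
  have geodesic_l: "geodesic v l = v # geodesic v' l" "v' \<in> set (geodesic v l)"
    unfolding v'_def less.prems(6)
    using geodesic_Cons(1) towards_in_geodesic \<open>v \<in> V\<close> less.prems(3,5) by auto
  have "ell V adj d u v' * ell V adj d v' l \<le> dv adj d v' * ell V adj d u l"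
  proof -
    consider "v' = u" | "v' = l" | "v' \<noteq> u" "v' \<noteq> l" "towards v' u = towards v' l"
      | "v' \<noteq> u" "v' \<noteq> l" "towards v' u \<noteq> towards v' l"
      by blast
    then show ?thesis
    proof cases
      case 3
      have "length (geodesic v' l) < length (geodesic v l)"
        using geodesic_l by simp
      then show ?thesis
        using less.hyps[OF _ less.prems(1) \<open>v' \<in> nodes V adj\<close> less.prems(3)] 3 by fastforce
    next
      case 4
      then show ?thesis
        using ell_mult_ell_eq_if_different_branches[OF less.prems(1) \<open>v' \<in> nodes V adj\<close> less.prems(3)]
        by simp
    qed (auto simp: mult.commute)
  qed
  then show ?case
    using ell_mult_ell_less_step[OF assms(1) less.prems(2) \<open>v' \<in> nodes V adj\<close> \<open>adj v v'\<close>
        less.prems(1,3) \<open>v' \<in> set (geodesic v u)\<close> geodesic_l(2)] by blast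
qed

end

lemma in_form_eq_if_min_weight:
  assumes "F m0 \<noteq> 0" "wt m0 = t" "\<And>m. F m \<noteq> 0 \<Longrightarrow> t \<le> wt m"
  shows "in_form wt F = (\<lambda>m. if wt m = t then F m else 0)"
proof -
  have "(LEAST k. \<exists>m. F m \<noteq> 0 \<and> wt m = k) = t"
    using assms by (intro Least_equality) auto
  then show ?thesis
    unfolding in_form_def by (auto simp: fun_eq_iff)
qed

lemma sum_mono_series_not_in_image:
  "m \<notin> M ` A \<Longrightarrow> (\<Sum>x\<in>A. mono_series (M x) (C x) m) = 0"
  unfolding mono_series_def by (intro sum.neutral) auto

lemma sum_mono_series_at:
  assumes "finite A" "inj_on M A" "x0 \<in> A"
  shows "(\<Sum>x\<in>A. mono_series (M x) (C x) (M x0)) = C x0"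
proof -
  have "(\<Sum>x\<in>A. mono_series (M x) (C x) (M x0)) = (\<Sum>x\<in>A. if x = x0 then C x0 else 0)"
    using assms(2,3) by (intro sum.cong) (auto simp: mono_series_def inj_on_eq_iff)
  then show ?thesis
    using assms(1,3) by simp
qed

lemma in_form_monomial_sum:
  fixes wt :: "('v \<Rightarrow> nat) \<Rightarrow> nat" and G :: "'v series"
    and M :: "'a \<Rightarrow> 'v \<Rightarrow> nat" and C :: "'a \<Rightarrow> complex"
  assumes "finite A" "S \<subseteq> A" "inj_on M A"
    and weight_S: "\<And>x. x \<in> S \<Longrightarrow> wt (M x) = t"
    and weight_A: "\<And>x. x \<in> A - S \<Longrightarrow> t < wt (M x)"
    and weight_G: "\<And>m. G m \<noteq> 0 \<Longrightarrow> t < wt m"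
    and "x0 \<in> S" "C x0 \<noteq> 0"
  shows "in_form wt (\<lambda>m. (\<Sum>x\<in>A. mono_series (M x) (C x) m) + G m)
       = (\<lambda>m. \<Sum>x\<in>S. mono_series (M x) (C x) m)"
proof -
  define F where "F m = (\<Sum>x\<in>A. mono_series (M x) (C x) m) + G m" for m
  have G_zero: "G m = 0" if "wt m = t" for m
    using weight_G that by force
  have sum_A: "(\<Sum>x\<in>A. mono_series (M x) (C x) m) = (\<Sum>x\<in>S. mono_series (M x) (C x) m)"
    if "wt m = t" for m
  proof -
    have "(\<Sum>x\<in>A - S. mono_series (M x) (C x) m) = 0"
      using weight_A that by (force intro: sum_mono_series_not_in_image)
    then show ?thesis
      using sum.subset_diff[OF assms(2,1), of "\<lambda>x. mono_series (M x) (C x) m"] by simp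
  qed
  have sum_S: "(\<Sum>x\<in>S. mono_series (M x) (C x) m) = 0" if "wt m \<noteq> t" for m
    using weight_S that by (force intro: sum_mono_series_not_in_image)
  have "t \<le> wt m" if "F m \<noteq> 0" for m
  proof (cases "G m = 0")
    case True
    then have "m \<in> M ` A"
      using that sum_mono_series_not_in_image unfolding F_def by force
    then show ?thesis
      using weight_S weight_A by (cases "m \<in> M ` S") (auto intro: less_imp_le)
  next
    case False
    then show ?thesis
      using weight_G less_imp_le by blast
  qed
  moreover have "F (M x0) = C x0"
    using sum_A G_zero weight_S sum_mono_series_at[OF finite_subset[OF assms(2,1)]
        inj_on_subset[OF assms(3,2)] \<open>x0 \<in> S\<close>]
    unfolding F_def by (simp add: \<open>x0 \<in> S\<close>)
  ultimately have "in_form wt F = (\<lambda>m. if wt m = t then F m else 0)"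
    using in_form_eq_if_min_weight[of F "M x0" wt t] weight_S \<open>x0 \<in> S\<close> \<open>C x0 \<noteq> 0\<close> by simp
  then show ?thesis
    using sum_A G_zero sum_S unfolding F_def by (auto simp: fun_eq_iff)
qed

lemma det_on_zero_column:
  assumes "i \<in> {1..k}" "\<And>a. a \<in> {1..k} \<Longrightarrow> M a i = 0"
  shows "det_on k M = 0"
  unfolding det_on_def
proof (rule sum.neutral, rule ballI)
  fix p
  assume "p \<in> {p. p permutes {1..k}}"
  then obtain a where "a \<in> {1..k}" "p a = i"
    using permutes_image[of p "{1..k}"] assms(1) by (metis image_iff mem_Collect_eq)
  then have "(\<Prod>a\<in>{1..k}. M a (p a)) = 0"
    using assms(2) by (intro prod_zero bexI[of _ a]) auto
  then show "of_int (sign p) * (\<Prod>a\<in>{1..k}. M a (p a)) = 0"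
    by simp
qed

lemma max_minors_nonzero_imp_coeff_nonzero:
  assumes "max_minors_nonzero adj c v" "i \<in> {1..valency adj v - 2}"
    and "T \<subseteq> nbrs adj v" "finite T" "valency adj v - 2 \<le> card T"
  shows "\<exists>x\<in>T. c v x i \<noteq> 0"
proof (rule ccontr)
  assume "\<not> (\<exists>x\<in>T. c v x i \<noteq> 0)"
  define k where "k = valency adj v - 2"
  obtain T' where "T' \<subseteq> T" "card T' = k"
    using obtain_subset_with_card_n assms(5) unfolding k_def by metis
  then obtain h where h: "bij_betw h {1..k} T'"
    using ex_bij_betw_nat_finite_1 finite_subset[OF _ assms(4)] by metis
  then have "det_on k (\<lambda>a b. c v (h a) b) \<noteq> 0"
    using assms(1,3) \<open>T' \<subseteq> T\<close> unfolding max_minors_nonzero_def k_def bij_betw_def by blast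
  moreover have "det_on k (\<lambda>a b. c v (h a) b) = 0"
    using \<open>\<not> (\<exists>x\<in>T. c v x i \<noteq> 0)\<close> \<open>T' \<subseteq> T\<close> h assms(2) unfolding k_def
    by (intro det_on_zero_column) (auto simp: bij_betw_def image_subset_iff)
  ultimately show False
    by contradiction
qed

context weighted_tree
begin

lemma finite_leaves: "finite (leaves V adj)"
  using finite_V unfolding leaves_def by simp

lemma wdot_mexp:
  "wdot V adj d u (mexp V adj \<alpha> v x) = (\<Sum>l\<in>Lset V adj v x. \<alpha> v x l * ell V adj d u l)"
proof -
  have "Lset V adj v x \<subseteq> leaves V adj"
    unfolding Lset_def by blast
  then show ?thesis
    unfolding wdot_def mexp_def using finite_leaves
    by (simp add: sum.inter_restrict[symmetric] Int_absorb1 if_distrib mult.commute cong: if_cong)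
qed

lemma Lset_towards:
  assumes "v \<in> nodes V adj" "adj v x" "l \<in> Lset V adj v x"
  shows "l \<in> V" "l \<noteq> v" "towards v l = x"
proof -
  show "l \<in> V" "l \<noteq> v"
    using assms(1,3) unfolding Lset_def leaves_def nodes_def by auto
  then show "towards v l = x"
    using towards_unique[OF _ \<open>l \<in> V\<close> assms(2)] assms(1,3) nodes_subset_V
    unfolding Lset_def geod_eq_set_geodesic by auto
qed

context
  fixes \<alpha> :: "'v \<Rightarrow> 'v \<Rightarrow> 'v \<Rightarrow> nat"
  assumes alpha: "\<And>v x. v \<in> nodes V adj \<Longrightarrow> adj v x \<Longrightarrow>
    dv adj d v = (\<Sum>l\<in>Lset V adj v x. \<alpha> v x l * ell V adj d v l)"
begin

lemma wdot_mexp_self: "v \<in> nodes V adj \<Longrightarrow> adj v x \<Longrightarrow> wdot V adj d v (mexp V adj \<alpha> v x) = dv adj d v"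
  using wdot_mexp alpha by simp

lemma wdot_mexp_away:
  assumes "u \<in> nodes V adj" "v \<in> nodes V adj" "u \<noteq> v" "adj v x" "x \<noteq> towards v u"
  shows "wdot V adj d u (mexp V adj \<alpha> v x) = ell V adj d u v"
proof -
  have "dv adj d v * wdot V adj d u (mexp V adj \<alpha> v x)
      = (\<Sum>l\<in>Lset V adj v x. \<alpha> v x l * (dv adj d v * ell V adj d u l))"
    unfolding wdot_mexp by (simp add: sum_distrib_left ac_simps)
  also have "\<dots> = (\<Sum>l\<in>Lset V adj v x. \<alpha> v x l * (ell V adj d u v * ell V adj d v l))"
  proof (rule sum.cong)
    fix l
    assume "l \<in> Lset V adj v x"
    note l = Lset_towards[OF assms(2,4) this]
    show "\<alpha> v x l * (dv adj d v * ell V adj d u l)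
        = \<alpha> v x l * (ell V adj d u v * ell V adj d v l)"
      using ell_mult_ell_eq_if_different_branches[OF assms(1,2) l(1) assms(3) l(2)] assms(5) l(3)
      by simp
  qed simp
  also have "\<dots> = dv adj d v * ell V adj d u v"
    using alpha[OF assms(2,4)] by (simp add: sum_distrib_left ac_simps)
  finally show ?thesis
    using dv_pos[OF assms(2)] by simp
qed

lemma wdot_mexp_towards:
  assumes "edge_determinant_condition V adj d"
    and "u \<in> nodes V adj" "v \<in> nodes V adj" "u \<noteq> v"
  shows "ell V adj d u v < wdot V adj d u (mexp V adj \<alpha> v (towards v u))"
proof -
  define x where "x = towards v u"
  have "u \<in> V" "v \<in> V"
    using assms(2,3) nodes_subset_V by auto
  have "adj v x"
    unfolding x_def using geodesic_Cons(2)[OF \<open>v \<in> V\<close> \<open>u \<in> V\<close>] assms(4) by simp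
  have less: "ell V adj d u v * ell V adj d v l < dv adj d v * ell V adj d u l"
    if "l \<in> Lset V adj v x" for l
    using ell_mult_ell_less_if_same_branch[OF assms(1-3)] Lset_towards[OF assms(3) \<open>adj v x\<close> that]
      assms(4) unfolding x_def by simp
  have "(\<Sum>l\<in>Lset V adj v x. \<alpha> v x l * ell V adj d v l) \<noteq> 0"
    using alpha[OF assms(3) \<open>adj v x\<close>] dv_pos[OF assms(3)] by simp
  then obtain l0 where l0: "l0 \<in> Lset V adj v x" "\<alpha> v x l0 * ell V adj d v l0 \<noteq> 0"
    by (rule sum.not_neutral_contains_not_neutral)
  have "ell V adj d u v * dv adj d v
      = (\<Sum>l\<in>Lset V adj v x. \<alpha> v x l * (ell V adj d u v * ell V adj d v l))"
    using alpha[OF assms(3) \<open>adj v x\<close>] by (simp add: sum_distrib_left ac_simps)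
  also have "\<dots> < (\<Sum>l\<in>Lset V adj v x. \<alpha> v x l * (dv adj d v * ell V adj d u l))"
  proof (rule sum_strict_mono_ex1)
    show "finite (Lset V adj v x)"
      using finite_leaves unfolding Lset_def by simp
    show "\<forall>l\<in>Lset V adj v x. \<alpha> v x l * (ell V adj d u v * ell V adj d v l)
        \<le> \<alpha> v x l * (dv adj d v * ell V adj d u l)"
      using less by (simp add: less_imp_le)
    show "\<exists>l\<in>Lset V adj v x. \<alpha> v x l * (ell V adj d u v * ell V adj d v l)
        < \<alpha> v x l * (dv adj d v * ell V adj d u l)"
      using l0 less by auto
  qed
  also have "\<dots> = dv adj d v * wdot V adj d u (mexp V adj \<alpha> v x)"
    unfolding wdot_mexp by (simp add: sum_distrib_left ac_simps)
  finally show ?thesis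
    unfolding x_def by (simp add: mult.commute)
qed

lemma inj_on_mexp:
  assumes "v \<in> nodes V adj"
  shows "inj_on (mexp V adj \<alpha> v) (nbrs adj v)"
proof (rule inj_onI)
  fix x x'
  assume x: "x \<in> nbrs adj v" and x': "x' \<in> nbrs adj v"
    and eq: "mexp V adj \<alpha> v x = mexp V adj \<alpha> v x'"
  have "wdot V adj d v (mexp V adj \<alpha> v x) \<noteq> 0"
    using wdot_mexp_self[OF assms] dv_pos[OF assms] x by (simp add: nbrs_def)
  then obtain l where "l \<in> leaves V adj" "ell V adj d v l * mexp V adj \<alpha> v x l \<noteq> 0"
    unfolding wdot_def by (rule sum.not_neutral_contains_not_neutral)
  then have "mexp V adj \<alpha> v x l \<noteq> 0" "mexp V adj \<alpha> v x' l \<noteq> 0"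
    using eq by simp_all
  then have "l \<in> Lset V adj v x" "l \<in> Lset V adj v x'"
    by (auto simp: mexp_def split: if_splits)
  then show "x = x'"
    using Lset_towards(3)[OF assms] x x' by (auto simp: nbrs_def)
qed

lemma in_form_F_series_self:
  assumes "v \<in> nodes V adj" "max_minors_nonzero adj c v" "i \<in> {1..valency adj v - 2}"
    and "\<And>m. g v i m \<noteq> 0 \<Longrightarrow> dv adj d v < wdot V adj d v m"
  shows "in_form (wdot V adj d v) (F_series V adj \<alpha> c g v i) = fpart V adj \<alpha> c v i"
proof -
  obtain x0 where "x0 \<in> nbrs adj v" "c v x0 i \<noteq> 0"
    using max_minors_nonzero_imp_coeff_nonzero[OF assms(2,3) order_refl finite_nbrs]
    by (auto simp: valency_def)
  then show ?thesis
    unfolding F_series_def fpart_def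
    using inj_on_mexp[OF assms(1)] wdot_mexp_self[OF assms(1)] assms(4)
    by (intro in_form_monomial_sum[OF finite_nbrs order_refl]) (auto simp: nbrs_def)
qed

lemma in_form_F_series_other:
  assumes "edge_determinant_condition V adj d"
    and "u \<in> nodes V adj" "v \<in> nodes V adj" "u \<noteq> v"
    and "max_minors_nonzero adj c v" "i \<in> {1..valency adj v - 2}"
    and "\<And>m. g v i m \<noteq> 0 \<Longrightarrow> ell V adj d u v < wdot V adj d u m"
  shows "in_form (wdot V adj d u) (F_series V adj \<alpha> c g v i)
       = (\<lambda>m. fpart V adj \<alpha> c v i m
              - mono_series (mexp V adj \<alpha> v (towards v u)) (c v (towards v u) i) m)"
proof -
  define x0 where "x0 = towards v u"
  have "x0 \<in> nbrs adj v"
    unfolding x0_def nbrs_def using geodesic_Cons(2) assms(2-4) nodes_subset_V by auto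
  have "valency adj v - 2 \<le> card (nbrs adj v - {x0})"
    using \<open>x0 \<in> nbrs adj v\<close> finite_nbrs by (simp add: valency_def)
  then obtain x1 where "x1 \<in> nbrs adj v - {x0}" "c v x1 i \<noteq> 0"
    using max_minors_nonzero_imp_coeff_nonzero[OF assms(5,6)] finite_nbrs by blast
  then have "in_form (wdot V adj d u) (F_series V adj \<alpha> c g v i)
      = (\<lambda>m. \<Sum>x\<in>nbrs adj v - {x0}. mono_series (mexp V adj \<alpha> v x) (c v x i) m)"
    unfolding F_series_def fpart_def
    using inj_on_mexp[OF assms(3)] wdot_mexp_away[OF assms(2-4)] assms(7)
      wdot_mexp_towards[OF assms(1-4)] unfolding x0_def
    by (intro in_form_monomial_sum[OF finite_nbrs]) (auto simp: nbrs_def)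
  moreover have "fpart V adj \<alpha> c v i m = mono_series (mexp V adj \<alpha> v x0) (c v x0 i) m
      + (\<Sum>x\<in>nbrs adj v - {x0}. mono_series (mexp V adj \<alpha> v x) (c v x i) m)" for m
    unfolding fpart_def using sum.remove[OF finite_nbrs \<open>x0 \<in> nbrs adj v\<close>] .
  ultimately show ?thesis
    unfolding x0_def by simp
qed

end

end

theorem proposition2p18:
  fixes V :: "'v set" and adj :: "'v \<Rightarrow> 'v \<Rightarrow> bool" and d :: "'v \<Rightarrow> 'v \<Rightarrow> nat"
    and \<alpha> :: "'v \<Rightarrow> 'v \<Rightarrow> 'v \<Rightarrow> nat" and c :: "'v \<Rightarrow> 'v \<Rightarrow> nat \<Rightarrow> complex"
    and g :: "'v \<Rightarrow> nat \<Rightarrow> 'v series"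
  assumes "splice_diagram V adj d"
    and "edge_determinant_condition V adj d"
    and "semigroup_condition V adj d"
    and "splice_type_system V adj d \<alpha> c g"
    and "u \<in> nodes V adj" and "v \<in> nodes V adj"
    and "i \<in> {1..valency adj v - 2}"
  shows "(u = v \<longrightarrow>
            in_form (wdot V adj d u) (F_series V adj \<alpha> c g v i) = fpart V adj \<alpha> c v i)
       \<and> (u \<noteq> v \<longrightarrow>
            (\<exists>!x. x \<in> nbrs adj v \<and> x \<in> geod V adj v u) \<and>
            (\<forall>x. x \<in> nbrs adj v \<and> x \<in> geod V adj v u \<longrightarrow>
               in_form (wdot V adj d u) (F_series V adj \<alpha> c g v i)
                 = (\<lambda>m. fpart V adj \<alpha> c v i m - mono_series (mexp V adj \<alpha> v x) (c v x i) m)))"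
proof -
  interpret weighted_tree V adj d
    using assms(1) by unfold_locales (auto simp: splice_diagram_def nbrs_def)
  have alpha: "\<And>v x. v \<in> nodes V adj \<Longrightarrow> adj v x \<Longrightarrow>
      dv adj d v = (\<Sum>l\<in>Lset V adj v x. \<alpha> v x l * ell V adj d v l)"
    using assms(4) unfolding splice_type_system_def nbrs_def by auto
  have minors: "max_minors_nonzero adj c v"
    using assms(4,6) unfolding splice_type_system_def by auto
  have g_weights: "dv adj d v < wdot V adj d v m
      \<and> (\<forall>u\<in>nodes V adj. u \<noteq> v \<longrightarrow> ell V adj d u v < wdot V adj d u m)" if "g v i m \<noteq> 0" for m
    using assms(4,6,7) that unfolding splice_type_system_def g_admissible_def by blast
  have "u \<in> V" "v \<in> V"
    using assms(5,6) nodes_subset_V by auto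
  show ?thesis
    using in_form_F_series_self[OF alpha assms(6) minors assms(7)]
      in_form_F_series_other[OF alpha assms(2,5,6) _ minors assms(7)]
      nbrs_geod_iff_towards[OF \<open>v \<in> V\<close> \<open>u \<in> V\<close>] g_weights assms(5)
    by auto
qed

end
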